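(* Let $\gamma>0$, $s\in(0,1)$, $H(u;\gamma)=\frac{\gamma}{1+u}\{1+\log(1+u)\}^{-1-\gamma}$ for $u>0$, and for $z\in\mathbb{R}$ let $f_0(z)=\phi(z;0,1)$, $f_1(z)=\int_0^\infty\phi(z;0,u)H(u;\gamma)\,du$, $f(z)=(1-s)f_0(z)+sf_1(z)$, where $\phi(\cdot;0,u)$ is the $N(0,u)$ density. Then: (i) for all $z\in\mathbb{R}$, $0<f_0(z)=f_0(|z|)\le f_0(0)<\infty$, $0<f_1(z)=f_1(|z|)\le f_1(0)<\infty$, and $0<f(z)=f(|z|)\le f(0)<\infty$; (ii) $f_0(r)$, $f_1(r)$, $f(r)$ are continuous and nonincreasing functions of $r\ge0$; (iii) $\lim_{|z|\to\infty}f_0(z)/f_1(z)=0$ and $\sup_{z\in\mathbb{R}}f_0(z)/f_1(z)<\infty$; (iv) there exists $C_1>0$ such that $f_1(z)\le\frac{C_1}{|z|}\{1+\log(1+|z|^2)\}^{-1-\gamma}$ for all $z\ne0$; (v) there exists $C_2>0$ such that $f_1(z)\ge\frac{C_2}{|z|}\{1+\log(1+|z|^2)\}^{-1-\gamma}$ for all $z\in\mathbb{R}\setminus(-1,1)$; (vi) there exists $C_3>0$ such that $f_1(z)\le\frac{C_3}{1+|z|}$ for all $z\in\mathbb{R}$; (vii) there exists $C_4>0$ such that for all $\tilde y,\tilde\mu\in\mathbb{R}$ and all $\sigma\in(0,\infty)$, $$|\tilde y|\,f_1\Big(\frac{\tilde y-\tilde\mu}{\sigma}\Big)\le|\tilde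 y|\,f_1\Big(\frac{|\tilde y|-|\tilde\mu|}{\sigma}\Big)\le C_4(\sigma+|\tilde\mu|).$$ *)

theory Defs
  imports "HOL-Probability.Probability"
begin

definition Hmix :: "real \<Rightarrow> real \<Rightarrow> real" where
  "Hmix \<gamma> u = \<gamma> / (1 + u) * (1 + ln (1 + u)) powr (-1 - \<gamma>)"

text \<open>phi(z;0,u) is the N(0,u) density (variance u, so standard deviation sqrt u).\<close>
definition f0 :: "real \<Rightarrow> real" where
  "f0 z = normal_density 0 1 z"

definition f1 :: "real \<Rightarrow> real \<Rightarrow> real" where
  "f1 \<gamma> z = (LBINT u:{0<..}. normal_density 0 (sqrt u) z * Hmix \<gamma> u)"

definition fmix :: "real \<Rightarrow> real \<Rightarrow> real \<Rightarrow> real" where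
  "fmix \<gamma> s z = (1 - s) * f0 z + s * f1 \<gamma> z"

end

(*
  f1 is a scale mixture of centred normals: its integrand
  exp (-z^2/(2u)) / sqrt (2 pi u) * H(u) is even and nonincreasing in |z|, and is dominated by
  gamma / sqrt (2 pi) * 1 / (sqrt u * (u + 1)), whose integral over (0, oo) is finite.  This gives
  integrability, symmetry, monotonicity and, by dominated convergence, continuity.

  For |z| >= 1 every factor of the integrand on the window z^2 <= u <= 2 z^2 is comparable to its
  value at u = z^2, which gives the lower bound C / |z| * (1 + log (1 + z^2))^(-1-gamma).
  For the upper bound split exp (-z^2/(2u)) = E^2 with E = exp (-z^2/(4u)).  One factor E times
  the logarithmic factor of H(u) is O((1 + log (1 + z^2))^(-1-gamma)): for u >= |z| the logarithmic
  factor alone suffices, for u < |z| we have E <= exp (-|z|/4).  The other factor satisfies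
  E / (1 + u) <= 1 / (u + z^2/4), and the integral of 1 / (sqrt u * (u + z^2/4)) is 2 pi / |z|.

  The Gaussian f0 decays faster than this lower bound, so f0 / f1 tends to 0; the bound
  C3 / (1 + |z|) combines the upper bound with f1 z <= f1 0; and the last claim follows from
  ||y| - |mu|| <= |y - mu| and a case split on |y| <= 2 |mu| + sigma.
*)

theory Submission
  imports Defs "HOL-Real_Asymp.Real_Asymp"
begin

lemma inv_sqrt_mul_add_integral:
  fixes a :: real
  assumes a: "a > 0"
  shows "set_integrable lborel {0<..} (\<lambda>u. 1 / (sqrt u * (u + a)))"
    and "(LBINT u:{0<..}. 1 / (sqrt u * (u + a))) = pi / sqrt a"
proof -
  define s where "s = sqrt a"
  have s: "0 < s" "a = s\<^sup>2"
    using a by (simp_all add: s_def)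
  define F where "F u = 2 / s * arctan (sqrt u / s)" for u
  have deriv: "(F has_real_derivative 1 / (sqrt u * (u + a))) (at u)" if "0 < u" for u
    unfolding F_def s(2) using that s(1)
    by (auto intro!: derivative_eq_intros simp: power_divide divide_simps add_pos_pos)
      (simp add: algebra_simps power2_eq_square)
  have "(F \<longlongrightarrow> 0) (at_right 0)" "(F \<longlongrightarrow> pi / s) at_top"
    unfolding F_def using s(1) by real_asymp+
  then have "set_integrable lborel (einterval 0 \<infinity>) (\<lambda>u. 1 / (sqrt u * (u + a)))
      \<and> (LBINT u=0..\<infinity>. 1 / (sqrt u * (u + a))) = pi / s - 0"
    using deriv a
    by (intro conjI interval_integral_FTC_nonneg[where F = F])
      (auto simp: zero_ereal_def ereal_tendsto_simps intro!: AE_I2 continuous_intros)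
  then show "set_integrable lborel {0<..} (\<lambda>u. 1 / (sqrt u * (u + a)))"
    and "(LBINT u:{0<..}. 1 / (sqrt u * (u + a))) = pi / sqrt a"
    by (auto simp: s_def zero_ereal_def einterval_eq_Ici interval_integral_to_infinity_eq)
qed

lemma set_integral_Ioi_indicator_Icc:
  fixes a b c :: real
  assumes "0 < a" "a \<le> b"
  shows "set_integrable lborel {0<..} (\<lambda>u. indicator {a..b} u * c)"
    and "(LBINT u:{0<..}. indicator {a..b} u * c) = (b - a) * c"
proof -
  have restrict: "(\<lambda>u. indicator {0<..} u *\<^sub>R (indicator {a..b} u * c)) = (\<lambda>u. indicator {a..b} u * c)"
    using assms by (auto simp: fun_eq_iff split: split_indicator)
  show "set_integrable lborel {0<..} (\<lambda>u. indicator {a..b} u * c)"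
    unfolding set_integrable_def restrict
    using assms by (simp add: integrable_indicator_iff emeasure_lborel_Icc)
  show "(LBINT u:{0<..}. indicator {a..b} u * c) = (b - a) * c"
    unfolding set_lebesgue_integral_def restrict using assms
    by (simp add: emeasure_lborel_Icc measure_def)
qed

lemma continuous_on_set_integral_param:
  fixes f :: "'a::metric_space \<Rightarrow> 'b \<Rightarrow> real"
  assumes meas: "\<And>x. f x \<in> borel_measurable M" and A: "A \<in> sets M"
    and w: "set_integrable M A w"
    and dom: "\<And>x u. u \<in> A \<Longrightarrow> \<bar>f x u\<bar> \<le> w u"
    and cont: "\<And>u. u \<in> A \<Longrightarrow> continuous_on UNIV (\<lambda>x. f x u)"
  shows "continuous_on UNIV (\<lambda>x. LINT u:A|M. f x u)"
  unfolding continuous_on_eq_continuous_at[OF open_UNIV]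
proof (intro ballI continuous_at_sequentiallyI)
  fix a and X :: "nat \<Rightarrow> 'a"
  assume X: "X \<longlonglongrightarrow> a"
  have "(\<lambda>n. LINT u|M. indicator A u *\<^sub>R f (X n) u) \<longlonglongrightarrow> (LINT u|M. indicator A u *\<^sub>R f a u)"
  proof (rule integral_dominated_convergence[where w = "\<lambda>u. indicator A u *\<^sub>R w u"])
    show "integrable M (\<lambda>u. indicator A u *\<^sub>R w u)"
      using w by (simp add: set_integrable_def)
    show "AE u in M. (\<lambda>n. indicator A u *\<^sub>R f (X n) u) \<longlonglongrightarrow> indicator A u *\<^sub>R f a u"
      using cont X by (intro AE_I2)
        (auto simp: continuous_on_eq_continuous_at intro: isCont_tendsto_compose split: split_indicator)
    show "AE u in M. norm (indicator A u *\<^sub>R f (X n) u) \<le> indicator A u *\<^sub>R w u" for n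
      using dom by (intro AE_I2) (auto split: split_indicator)
  qed (use meas A in auto)
  then show "(\<lambda>n. LINT u:A|M. f (X n) u) \<longlonglongrightarrow> (LINT u:A|M. f a u)"
    by (simp add: set_lebesgue_integral_def)
qed

lemma one_plus_ln_pos: "0 \<le> x \<Longrightarrow> 0 < 1 + ln (1 + x :: real)"
  using ln_ge_zero[of "1 + x"] by linarith

lemma one_plus_ln_powr_le_1: "e \<le> 0 \<Longrightarrow> 0 \<le> x \<Longrightarrow> (1 + ln (1 + x :: real)) powr e \<le> 1"
  using powr_mono2'[of e 1 "1 + ln (1 + x)"] by simp

lemma one_plus_ln_double_le: "0 \<le> x \<Longrightarrow> 1 + ln (1 + 2 * x) \<le> 2 * (1 + ln (1 + x :: real))"
proof -
  assume x: "0 \<le> x"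
  have "ln (1 + 2 * x) \<le> ln (2 * (1 + x))"
    using x by simp
  also have "\<dots> = ln 2 + ln (1 + x)"
    using x by (subst ln_mult) auto
  finally have "ln (1 + 2 * x) \<le> ln 2 + ln (1 + x)" .
  moreover have "0 \<le> ln (1 + x)"
    using x by simp
  ultimately show ?thesis
    using ln_2_less_1 by simp
qed

lemma exp_neg_le_log_powr:
  fixes p :: real
  assumes "p > 0"
  shows "\<exists>M>0. \<forall>t\<ge>0. exp (- t / 4) \<le> M * (1 + ln (1 + t\<^sup>2)) powr (- p)"
proof -
  define L where "L t = 1 + ln (1 + t\<^sup>2)" for t :: real
  have L_pos: "0 < L t" for t
    unfolding L_def by (rule one_plus_ln_pos) simp
  have "((\<lambda>t. exp (- t / 4) * L t powr p) \<longlongrightarrow> 0) at_top"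
    unfolding L_def using assms by real_asymp
  then have "\<forall>\<^sub>F t in at_top. exp (- t / 4) * L t powr p < 1"
    by (rule order_tendstoD) simp
  then obtain X where X: "\<And>t. X \<le> t \<Longrightarrow> exp (- t / 4) * L t powr p < 1"
    by (auto simp: eventually_at_top_linorder)
  define M where "M = max 1 (L X powr p)"
  have "exp (- t / 4) * L t powr p \<le> M" if "0 \<le> t" for t
  proof (cases "X \<le> t")
    case True
    then show ?thesis
      using X[of t] by (simp add: M_def)
  next
    case False
    have "exp (- t / 4) * L t powr p \<le> L t powr p"
      using that by (intro mult_left_le_one_le) auto
    also have "\<dots> \<le> L X powr p"
    proof -
      have "t\<^sup>2 \<le> X\<^sup>2"
        using False that by (intro power_mono) auto
      then show ?thesis
        using assms L_pos[of t] unfolding L_def by (intro powr_mono2) (auto simp: add_pos_nonneg)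
    qed
    finally show ?thesis
      by (simp add: M_def)
  qed
  then have "exp (- t / 4) \<le> M * L t powr (- p)" if "0 \<le> t" for t
    using that L_pos[of t] by (simp add: powr_minus field_simps)
  moreover have "M > 0"
    by (simp add: M_def)
  ultimately show ?thesis
    unfolding L_def by blast
qed

lemma exp_div_one_plus_le:
  fixes z u :: real
  assumes "0 < u"
  shows "exp (- z\<^sup>2 / (4 * u)) / (1 + u) \<le> 1 / (u + z\<^sup>2 / 4)"
proof -
  define a where "a = z\<^sup>2 / (4 * u)"
  have a: "0 \<le> a"
    using assms by (simp add: a_def)
  have "exp (- a) \<le> 1 / (1 + a)"
    using exp_ge_add_one_self[of a] a by (simp add: exp_minus field_simps)
  then have "exp (- a) / (1 + u) \<le> 1 / ((1 + a) * (1 + u))"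
    using divide_right_mono[of "exp (- a)" "1 / (1 + a)" "1 + u"] assms by simp
  also have "\<dots> \<le> 1 / (u + z\<^sup>2 / 4)"
  proof (rule divide_left_mono)
    show "u + z\<^sup>2 / 4 \<le> (1 + a) * (1 + u)"
      using assms a by (simp add: a_def field_simps)
    show "0 < (1 + a) * (1 + u) * (u + z\<^sup>2 / 4)"
      using assms a by (intro mult_pos_pos add_pos_nonneg) auto
  qed simp
  finally show ?thesis
    by (simp add: a_def)
qed

lemma abs_mult_location_scale_le_abs_diff:
  fixes g :: "real \<Rightarrow> real"
  assumes antimono: "\<And>z\<^sub>1 z\<^sub>2. \<bar>z\<^sub>1\<bar> \<le> \<bar>z\<^sub>2\<bar> \<Longrightarrow> g z\<^sub>2 \<le> g z\<^sub>1" and "\<sigma> > 0"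
  shows "\<bar>y\<bar> * g ((y - \<mu>) / \<sigma>) \<le> \<bar>y\<bar> * g ((\<bar>y\<bar> - \<bar>\<mu>\<bar>) / \<sigma>)"
proof -
  have "\<bar>(\<bar>y\<bar> - \<bar>\<mu>\<bar>) / \<sigma>\<bar> \<le> \<bar>(y - \<mu>) / \<sigma>\<bar>"
    using abs_triangle_ineq3[of y \<mu>] \<open>\<sigma> > 0\<close> by (simp add: divide_right_mono)
  then show ?thesis
    by (intro mult_left_mono antimono) auto
qed

lemma abs_mult_location_scale_abs_diff_le:
  fixes g :: "real \<Rightarrow> real"
  assumes bound: "\<And>z. g z \<le> C / (1 + \<bar>z\<bar>)" and "0 \<le> C" "\<sigma> > 0"
  shows "\<bar>y\<bar> * g ((\<bar>y\<bar> - \<bar>\<mu>\<bar>) / \<sigma>) \<le> 2 * C * (\<sigma> + \<bar>\<mu>\<bar>)"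
proof (cases "\<bar>y\<bar> \<le> 2 * \<bar>\<mu>\<bar> + \<sigma>")
  case True
  define t where "t = (\<bar>y\<bar> - \<bar>\<mu>\<bar>) / \<sigma>"
  have "g t \<le> C / (1 + \<bar>t\<bar>)"
    by (rule bound)
  also have "\<dots> \<le> C / 1"
    using \<open>0 \<le> C\<close> by (intro divide_left_mono) auto
  finally have "\<bar>y\<bar> * g t \<le> \<bar>y\<bar> * C"
    by (intro mult_left_mono) auto
  also have "\<dots> \<le> (2 * \<bar>\<mu>\<bar> + \<sigma>) * C"
    using True \<open>0 \<le> C\<close> by (intro mult_right_mono)
  also have "\<dots> \<le> 2 * C * (\<sigma> + \<bar>\<mu>\<bar>)"
    using \<open>0 \<le> C\<close> \<open>\<sigma> > 0\<close> by (simp add: algebra_simps)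
  finally show ?thesis
    by (simp add: t_def)
next
  case False
  define d where "d = \<bar>y\<bar> - \<bar>\<mu>\<bar>"
  have d: "0 < d" "\<bar>y\<bar> \<le> 2 * d"
    using False \<open>\<sigma> > 0\<close> by (auto simp: d_def)
  have "g (d / \<sigma>) \<le> C / (1 + \<bar>d / \<sigma>\<bar>)"
    by (rule bound)
  also have "\<dots> \<le> C / (d / \<sigma>)"
    using d \<open>\<sigma> > 0\<close> \<open>0 \<le> C\<close> by (intro divide_left_mono mult_pos_pos add_pos_pos) auto
  finally have "\<bar>y\<bar> * g (d / \<sigma>) \<le> \<bar>y\<bar> * (C / (d / \<sigma>))"
    by (intro mult_left_mono) auto
  also have "\<dots> \<le> 2 * d * (C / (d / \<sigma>))"
    using d \<open>0 \<le> C\<close> \<open>\<sigma> > 0\<close> by (intro mult_right_mono) auto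
  also have "\<dots> = 2 * C * \<sigma>"
    using d \<open>\<sigma> > 0\<close> by simp
  also have "\<dots> \<le> 2 * C * (\<sigma> + \<bar>\<mu>\<bar>)"
    using \<open>0 \<le> C\<close> by (intro mult_left_mono) auto
  finally show ?thesis
    by (simp add: d_def)
qed

section \<open>The mixture integrand\<close>

lemma Hmix_pos: "\<gamma> > 0 \<Longrightarrow> 0 \<le> u \<Longrightarrow> 0 < Hmix \<gamma> u"
  unfolding Hmix_def using one_plus_ln_pos[of u] by simp

lemma Hmix_le: "\<gamma> > 0 \<Longrightarrow> 0 \<le> u \<Longrightarrow> Hmix \<gamma> u \<le> \<gamma> / (1 + u)"
  unfolding Hmix_def using one_plus_ln_powr_le_1[of "-1 - \<gamma>" u]
  by (intro mult_left_le) auto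

definition mix_integrand :: "real \<Rightarrow> real \<Rightarrow> real \<Rightarrow> real" where
  "mix_integrand \<gamma> z u = normal_density 0 (sqrt u) z * Hmix \<gamma> u"

lemma f1_eq_set_integral: "f1 \<gamma> z = (LBINT u:{0<..}. mix_integrand \<gamma> z u)"
  unfolding f1_def mix_integrand_def ..

lemma mix_integrand_eq:
  "0 < u \<Longrightarrow> mix_integrand \<gamma> z u = exp (- z\<^sup>2 / (2 * u)) / sqrt (2 * pi * u) * Hmix \<gamma> u"
  unfolding mix_integrand_def normal_density_def by simp

lemma mix_integrand_abs [simp]: "mix_integrand \<gamma> \<bar>z\<bar> u = mix_integrand \<gamma> z u"
  unfolding mix_integrand_def normal_density_def by simp

lemma mix_integrand_pos: "\<gamma> > 0 \<Longrightarrow> 0 < u \<Longrightarrow> 0 < mix_integrand \<gamma> z u"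
  using Hmix_pos[of \<gamma> u] by (simp add: mix_integrand_eq)

lemma mix_integrand_antimono:
  assumes "\<gamma> > 0" "0 < u" "\<bar>z\<^sub>1\<bar> \<le> \<bar>z\<^sub>2\<bar>"
  shows "mix_integrand \<gamma> z\<^sub>2 u \<le> mix_integrand \<gamma> z\<^sub>1 u"
proof -
  have "z\<^sub>1\<^sup>2 \<le> z\<^sub>2\<^sup>2"
    using assms(3) by (simp add: abs_le_square_iff)
  then show ?thesis
    using assms Hmix_pos[of \<gamma> u]
    by (simp add: mix_integrand_eq divide_right_mono mult_right_mono)
qed

lemma mix_integrand_le_kernel:
  assumes "\<gamma> > 0" "0 < u"
  shows "mix_integrand \<gamma> z u \<le> \<gamma> / sqrt (2 * pi) * (1 / (sqrt u * (u + 1)))"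
proof -
  have "mix_integrand \<gamma> z u \<le> mix_integrand \<gamma> 0 u"
    using mix_integrand_antimono[OF assms] by simp
  also have "\<dots> = 1 / sqrt (2 * pi * u) * Hmix \<gamma> u"
    using assms by (simp add: mix_integrand_eq)
  also have "\<dots> \<le> 1 / sqrt (2 * pi * u) * (\<gamma> / (1 + u))"
    using assms by (intro mult_left_mono Hmix_le) auto
  also have "\<dots> = \<gamma> / sqrt (2 * pi) * (1 / (sqrt u * (u + 1)))"
    by (simp add: real_sqrt_mult field_simps)
  finally show ?thesis .
qed

lemma mix_integrand_measurable [measurable]: "mix_integrand \<gamma> z \<in> borel_measurable lborel"
  unfolding mix_integrand_def normal_density_def Hmix_def by measurable

lemma set_integrable_kernel_bound:
  "set_integrable lborel {0<..} (\<lambda>u. \<gamma> / sqrt (2 * pi) * (1 / (sqrt u * (u + 1))))"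
  by (intro set_integrable_mult_right inv_sqrt_mul_add_integral) simp

lemma set_integrable_mix_integrand:
  assumes "\<gamma> > 0"
  shows "set_integrable lborel {0<..} (mix_integrand \<gamma> z)"
  using set_integrable_kernel_bound
proof (rule set_integrable_bound)
  show "set_borel_measurable lborel {0<..} (mix_integrand \<gamma> z)"
    unfolding set_borel_measurable_def by measurable
  show "AE u in lborel. u \<in> {0<..} \<longrightarrow>
      norm (mix_integrand \<gamma> z u) \<le> norm (\<gamma> / sqrt (2 * pi) * (1 / (sqrt u * (u + 1))))"
  proof (intro AE_I2 impI)
    fix u :: real
    assume "u \<in> {0<..}"
    then show "norm (mix_integrand \<gamma> z u) \<le> norm (\<gamma> / sqrt (2 * pi) * (1 / (sqrt u * (u + 1))))"
      using assms mix_integrand_pos[of \<gamma> u z] mix_integrand_le_kernel[of \<gamma> u z] by simp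
  qed
qed

lemma f0_eq: "f0 z = exp (- z\<^sup>2 / 2) / sqrt (2 * pi)"
  unfolding f0_def normal_density_def by simp

lemma f0_pos: "0 < f0 z"
  by (simp add: f0_eq)

lemma f0_abs [simp]: "f0 \<bar>z\<bar> = f0 z"
  by (simp add: f0_eq)

lemma f0_antimono: "\<bar>z\<^sub>1\<bar> \<le> \<bar>z\<^sub>2\<bar> \<Longrightarrow> f0 z\<^sub>2 \<le> f0 z\<^sub>1"
  by (simp add: f0_eq abs_le_square_iff divide_right_mono)

lemma continuous_on_f0: "continuous_on UNIV f0"
  unfolding f0_eq[abs_def] by (intro continuous_intros) auto

lemma f1_abs [simp]: "f1 \<gamma> \<bar>z\<bar> = f1 \<gamma> z"
  by (simp add: f1_eq_set_integral)

lemma f1_antimono: "\<gamma> > 0 \<Longrightarrow> \<bar>z\<^sub>1\<bar> \<le> \<bar>z\<^sub>2\<bar> \<Longrightarrow> f1 \<gamma> z\<^sub>2 \<le> f1 \<gamma> z\<^sub>1"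
  unfolding f1_eq_set_integral
  by (intro set_integral_mono set_integrable_mix_integrand mix_integrand_antimono) auto

lemma continuous_on_f1:
  assumes "\<gamma> > 0"
  shows "continuous_on UNIV (f1 \<gamma>)"
  unfolding f1_eq_set_integral[abs_def]
proof (rule continuous_on_set_integral_param[OF _ _ set_integrable_kernel_bound])
  show "\<bar>mix_integrand \<gamma> z u\<bar> \<le> \<gamma> / sqrt (2 * pi) * (1 / (sqrt u * (u + 1)))"
    if "u \<in> {0<..}" for z u
    using that assms mix_integrand_pos[of \<gamma> u z] mix_integrand_le_kernel[of \<gamma> u z] by simp
  show "continuous_on UNIV (\<lambda>z. mix_integrand \<gamma> z u)" if "u \<in> {0<..}" for u
    using that unfolding mix_integrand_def normal_density_def by (intro continuous_intros) auto
qed auto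

section \<open>Tail bounds for the mixture density\<close>

lemma mix_integrand_ge_on_window:
  assumes "\<gamma> > 0" "1 \<le> \<bar>z\<bar>" "z\<^sup>2 \<le> u" "u \<le> 2 * z\<^sup>2"
  shows "exp (-1/2) * \<gamma> * 2 powr (-1 - \<gamma>) / (3 * sqrt (4 * pi)) / \<bar>z\<bar> ^ 3
      * (1 + ln (1 + \<bar>z\<bar>\<^sup>2)) powr (-1 - \<gamma>) \<le> mix_integrand \<gamma> z u"
proof -
  define t where "t = \<bar>z\<bar>"
  define L where "L = 1 + ln (1 + t\<^sup>2)"
  have t: "1 \<le> t" "z\<^sup>2 = t\<^sup>2"
    using assms(2) by (simp_all add: t_def)
  have u: "0 < u" "t\<^sup>2 \<le> u" "u \<le> 2 * t\<^sup>2"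
    using assms(3,4) t by (auto intro: less_le_trans[of 0 "t\<^sup>2"])
  have gauss: "exp (-1/2) \<le> exp (- z\<^sup>2 / (2 * u))"
    using u t by (simp add: field_simps)
  have "sqrt (2 * pi * u) \<le> sqrt (4 * pi * t\<^sup>2)"
    using u by simp
  also have "\<dots> = sqrt (4 * pi) * t"
    using t by (simp add: real_sqrt_mult)
  finally have "sqrt (2 * pi * u) \<le> sqrt (4 * pi) * t" .
  then have root: "1 / (sqrt (4 * pi) * t) \<le> 1 / sqrt (2 * pi * u)"
    using u t by (intro divide_left_mono) auto
  have "1 + u \<le> 3 * t\<^sup>2"
    using u t one_le_power[of t 2] by linarith
  then have tail: "\<gamma> / (3 * t\<^sup>2) \<le> \<gamma> / (1 + u)"
    using assms(1) u t by (intro divide_left_mono) auto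
  have "1 + ln (1 + u) \<le> 1 + ln (1 + 2 * t\<^sup>2)"
    using u by simp
  also have "\<dots> \<le> 2 * L"
    unfolding L_def by (rule one_plus_ln_double_le) simp
  finally have "(2 * L) powr (-1 - \<gamma>) \<le> (1 + ln (1 + u)) powr (-1 - \<gamma>)"
    using assms(1) u one_plus_ln_pos[of u] by (intro powr_mono2') auto
  then have log_factor: "2 powr (-1 - \<gamma>) * L powr (-1 - \<gamma>) \<le> (1 + ln (1 + u)) powr (-1 - \<gamma>)"
    using one_plus_ln_pos[of "t\<^sup>2"] by (simp add: powr_mult flip: L_def)
  have "exp (-1/2) * \<gamma> * 2 powr (-1 - \<gamma>) / (3 * sqrt (4 * pi)) / t ^ 3 * L powr (-1 - \<gamma>)
      = exp (-1/2) * (1 / (sqrt (4 * pi) * t))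
        * (\<gamma> / (3 * t\<^sup>2) * (2 powr (-1 - \<gamma>) * L powr (-1 - \<gamma>)))"
    by (simp add: power3_eq_cube power2_eq_square)
  also have "\<dots> \<le> exp (- z\<^sup>2 / (2 * u)) * (1 / sqrt (2 * pi * u))
      * (\<gamma> / (1 + u) * (1 + ln (1 + u)) powr (-1 - \<gamma>))"
    using gauss root tail log_factor assms(1) t u by (intro mult_mono) auto
  also have "\<dots> = mix_integrand \<gamma> z u"
    using u by (simp add: mix_integrand_eq Hmix_def)
  finally show ?thesis
    unfolding t_def L_def .
qed

lemma f1_lower_bound:
  assumes "\<gamma> > 0"
  shows "\<exists>C>0. \<forall>z. 1 \<le> \<bar>z\<bar> \<longrightarrow> C / \<bar>z\<bar> * (1 + ln (1 + \<bar>z\<bar>\<^sup>2)) powr (-1 - \<gamma>) \<le> f1 \<gamma> z"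
proof (intro exI conjI allI impI)
  define C where "C = exp (-1/2) * \<gamma> * 2 powr (-1 - \<gamma>) / (3 * sqrt (4 * pi))"
  show "C > 0"
    using assms by (simp add: C_def)
  fix z :: real
  assume z: "1 \<le> \<bar>z\<bar>"
  define v where "v = C / \<bar>z\<bar> ^ 3 * (1 + ln (1 + \<bar>z\<bar>\<^sup>2)) powr (-1 - \<gamma>)"
  have window: "0 < z\<^sup>2" "z\<^sup>2 \<le> 2 * z\<^sup>2"
    using z by auto
  have "C / \<bar>z\<bar> * (1 + ln (1 + \<bar>z\<bar>\<^sup>2)) powr (-1 - \<gamma>) = (2 * z\<^sup>2 - z\<^sup>2) * v"
    using z by (simp add: v_def power3_eq_cube power2_eq_square)
  also have "\<dots> = (LBINT u:{0<..}. indicator {z\<^sup>2..2 * z\<^sup>2} u * v)"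
    using set_integral_Ioi_indicator_Icc(2)[OF window] ..
  also have "\<dots> \<le> f1 \<gamma> z"
    unfolding f1_eq_set_integral
  proof (intro set_integral_mono set_integral_Ioi_indicator_Icc(1)[OF window]
      set_integrable_mix_integrand assms)
    show "indicator {z\<^sup>2..2 * z\<^sup>2} u * v \<le> mix_integrand \<gamma> z u" if "u \<in> {0<..}" for u
      using that assms z mix_integrand_ge_on_window[of \<gamma> z u] mix_integrand_pos[of \<gamma> u z]
      by (auto simp: v_def C_def split: split_indicator)
  qed
  finally show "C / \<bar>z\<bar> * (1 + ln (1 + \<bar>z\<bar>\<^sup>2)) powr (-1 - \<gamma>) \<le> f1 \<gamma> z" .
qed

lemma f1_pos:
  assumes "\<gamma> > 0"
  shows "0 < f1 \<gamma> z"
proof -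
  obtain C where "C > 0" and lower: "\<And>z. 1 \<le> \<bar>z\<bar> \<Longrightarrow> C / \<bar>z\<bar> * (1 + ln (1 + \<bar>z\<bar>\<^sup>2)) powr (-1 - \<gamma>) \<le> f1 \<gamma> z"
    using f1_lower_bound[OF assms] by blast
  have "0 < C / \<bar>max 1 \<bar>z\<bar>\<bar> * (1 + ln (1 + \<bar>max 1 \<bar>z\<bar>\<bar>\<^sup>2)) powr (-1 - \<gamma>)"
    using \<open>C > 0\<close> one_plus_ln_pos[of "(max 1 \<bar>z\<bar>)\<^sup>2"] by simp
  also have "\<dots> \<le> f1 \<gamma> (max 1 \<bar>z\<bar>)"
    by (rule lower) simp
  also have "\<dots> \<le> f1 \<gamma> z"
    using assms by (intro f1_antimono) auto
  finally show ?thesis .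
qed

lemma exp_log_factor_le:
  fixes z u :: real
  assumes "\<gamma> > 0" "0 < u"
    and exp_le: "\<And>t. 0 \<le> t \<Longrightarrow> exp (- t / 4) \<le> M * (1 + ln (1 + t\<^sup>2)) powr (-1 - \<gamma>)"
  shows "exp (- z\<^sup>2 / (4 * u)) * (1 + ln (1 + u)) powr (-1 - \<gamma>)
      \<le> max (2 powr (1 + \<gamma>)) M * (1 + ln (1 + \<bar>z\<bar>\<^sup>2)) powr (-1 - \<gamma>)"
proof -
  define L where "L = 1 + ln (1 + \<bar>z\<bar>\<^sup>2)"
  define P where "P = (1 + ln (1 + u)) powr (-1 - \<gamma>)"
  have L: "0 < L"
    unfolding L_def by (rule one_plus_ln_pos) simp
  have P: "0 \<le> P" "P \<le> 1"
    unfolding P_def using assms by (auto intro: one_plus_ln_powr_le_1)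
  have "exp (- z\<^sup>2 / (4 * u)) * P \<le> max (2 powr (1 + \<gamma>)) M * L powr (-1 - \<gamma>)"
  proof (cases "\<bar>z\<bar> \<le> u")
    case True
    have "ln (1 + \<bar>z\<bar>\<^sup>2) \<le> ln ((1 + \<bar>z\<bar>)\<^sup>2)"
      by (simp add: add_pos_nonneg power2_eq_square algebra_simps)
    also have "\<dots> = 2 * ln (1 + \<bar>z\<bar>)"
      by (simp add: ln_realpow)
    also have "\<dots> \<le> 2 * ln (1 + u)"
      using True by simp
    finally have "L / 2 \<le> 1 + ln (1 + u)"
      unfolding L_def using assms(2) ln_ge_zero[of "1 + u"] by simp
    have "exp (- z\<^sup>2 / (4 * u)) * P \<le> P"
      using P assms(2) by (intro mult_left_le_one_le) auto
    also have "P \<le> (L / 2) powr (-1 - \<gamma>)"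
      unfolding P_def using \<open>L / 2 \<le> 1 + ln (1 + u)\<close> assms(1) L by (intro powr_mono2') auto
    also have "\<dots> = 2 powr (1 + \<gamma>) * L powr (-1 - \<gamma>)"
      using L by (simp add: powr_divide powr_minus_divide divide_simps flip: powr_add)
    also have "\<dots> \<le> max (2 powr (1 + \<gamma>)) M * L powr (-1 - \<gamma>)"
      by (intro mult_right_mono) auto
    finally show ?thesis .
  next
    case False
    then have "u * \<bar>z\<bar> \<le> \<bar>z\<bar> * \<bar>z\<bar>"
      by (intro mult_right_mono) auto
    then have "\<bar>z\<bar> / 4 \<le> z\<^sup>2 / (4 * u)"
      using assms(2) by (simp add: field_simps power2_eq_square)
    have "exp (- z\<^sup>2 / (4 * u)) * P \<le> exp (- z\<^sup>2 / (4 * u))"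
      using P by (intro mult_right_le_one_le) auto
    also have "\<dots> \<le> exp (- \<bar>z\<bar> / 4)"
      using \<open>\<bar>z\<bar> / 4 \<le> z\<^sup>2 / (4 * u)\<close> by simp
    also have "\<dots> \<le> M * L powr (-1 - \<gamma>)"
      unfolding L_def using exp_le[of "\<bar>z\<bar>"] by simp
    also have "\<dots> \<le> max (2 powr (1 + \<gamma>)) M * L powr (-1 - \<gamma>)"
      by (intro mult_right_mono) auto
    finally show ?thesis .
  qed
  then show ?thesis
    unfolding L_def P_def .
qed

lemma mix_integrand_le_log_kernel:
  assumes "\<gamma> > 0" "0 < u"
    and exp_le: "\<And>t. 0 \<le> t \<Longrightarrow> exp (- t / 4) \<le> M * (1 + ln (1 + t\<^sup>2)) powr (-1 - \<gamma>)"
  shows "mix_integrand \<gamma> z u \<le> max (2 powr (1 + \<gamma>)) M * (1 + ln (1 + \<bar>z\<bar>\<^sup>2)) powr (-1 - \<gamma>)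
      * (\<gamma> / sqrt (2 * pi) * (1 / (sqrt u * (u + z\<^sup>2 / 4))))"
proof -
  define E where "E = exp (- z\<^sup>2 / (4 * u))"
  have "mix_integrand \<gamma> z u
      = E * (1 + ln (1 + u)) powr (-1 - \<gamma>) * (\<gamma> / sqrt (2 * pi) / sqrt u * (E / (1 + u)))"
    using assms(2) by (simp add: mix_integrand_eq Hmix_def E_def real_sqrt_mult
        flip: exp_add)
  also have "\<dots> \<le> max (2 powr (1 + \<gamma>)) M * (1 + ln (1 + \<bar>z\<bar>\<^sup>2)) powr (-1 - \<gamma>)
      * (\<gamma> / sqrt (2 * pi) / sqrt u * (1 / (u + z\<^sup>2 / 4)))"
    unfolding E_def using assms
    by (intro mult_mono[OF exp_log_factor_le[OF assms] mult_left_mono[OF exp_div_one_plus_le]])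
      (auto intro!: mult_nonneg_nonneg simp: le_max_iff_disj)
  finally show ?thesis
    by simp
qed

lemma f1_upper_bound:
  assumes "\<gamma> > 0"
  shows "\<exists>C>0. \<forall>z. z \<noteq> 0 \<longrightarrow> f1 \<gamma> z \<le> C / \<bar>z\<bar> * (1 + ln (1 + \<bar>z\<bar>\<^sup>2)) powr (-1 - \<gamma>)"
proof -
  obtain M where exp_le: "\<And>t. 0 \<le> t \<Longrightarrow> exp (- t / 4) \<le> M * (1 + ln (1 + t\<^sup>2)) powr (-1 - \<gamma>)"
    using exp_neg_le_log_powr[of "1 + \<gamma>"] assms by auto
  define M' where "M' = max (2 powr (1 + \<gamma>)) M"
  have "M' > 0"
    by (simp add: M'_def less_max_iff_disj)
  have "f1 \<gamma> z \<le> M' * \<gamma> / sqrt (2 * pi) * (2 * pi) / \<bar>z\<bar> * (1 + ln (1 + \<bar>z\<bar>\<^sup>2)) powr (-1 - \<gamma>)"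
    if "z \<noteq> 0" for z
  proof -
    define A where "A = M' * (1 + ln (1 + \<bar>z\<bar>\<^sup>2)) powr (-1 - \<gamma>) * (\<gamma> / sqrt (2 * pi))"
    have z: "0 < z\<^sup>2 / 4"
      using that by simp
    have "f1 \<gamma> z \<le> (LBINT u:{0<..}. A * (1 / (sqrt u * (u + z\<^sup>2 / 4))))"
      unfolding f1_eq_set_integral
      using mix_integrand_le_log_kernel[OF assms _ exp_le, of _ z]
      by (intro set_integral_mono set_integrable_mix_integrand assms set_integrable_mult_right
          inv_sqrt_mul_add_integral(1)[OF z]) (simp add: A_def M'_def mult.assoc)
    also have "\<dots> = A * (pi / sqrt (z\<^sup>2 / 4))"
      using inv_sqrt_mul_add_integral(2)[OF z] by (simp only: set_integral_mult_right)
    also have "\<dots> = M' * \<gamma> / sqrt (2 * pi) * (2 * pi) / \<bar>z\<bar> * (1 + ln (1 + \<bar>z\<bar>\<^sup>2)) powr (-1 - \<gamma>)"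
      by (simp add: A_def real_sqrt_divide)
    finally show ?thesis .
  qed
  moreover have "M' * \<gamma> / sqrt (2 * pi) * (2 * pi) > 0"
    using assms \<open>M' > 0\<close> by simp
  ultimately show ?thesis
    by blast
qed

lemma f1_le_div_one_plus_abs:
  assumes "\<gamma> > 0"
  shows "\<exists>C>0. \<forall>z. f1 \<gamma> z \<le> C / (1 + \<bar>z\<bar>)"
proof -
  obtain C where "C > 0"
    and upper: "\<And>z. z \<noteq> 0 \<Longrightarrow> f1 \<gamma> z \<le> C / \<bar>z\<bar> * (1 + ln (1 + \<bar>z\<bar>\<^sup>2)) powr (-1 - \<gamma>)"
    using f1_upper_bound[OF assms] by blast
  have "f1 \<gamma> z \<le> 2 * max C (f1 \<gamma> 0) / (1 + \<bar>z\<bar>)" for z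
  proof (cases "1 \<le> \<bar>z\<bar>")
    case True
    have "f1 \<gamma> z \<le> C / \<bar>z\<bar> * (1 + ln (1 + \<bar>z\<bar>\<^sup>2)) powr (-1 - \<gamma>)"
      using True by (intro upper) auto
    also have "\<dots> \<le> C / \<bar>z\<bar>"
      using \<open>C > 0\<close> assms by (intro mult_right_le_one_le one_plus_ln_powr_le_1) auto
    also have "\<dots> \<le> C / ((1 + \<bar>z\<bar>) / 2)"
      using True \<open>C > 0\<close> by (intro divide_left_mono) auto
    also have "\<dots> = 2 * C / (1 + \<bar>z\<bar>)"
      by simp
    also have "\<dots> \<le> 2 * max C (f1 \<gamma> 0) / (1 + \<bar>z\<bar>)"
      by (intro divide_right_mono) auto
    finally show ?thesis .
  next
    case False
    have "f1 \<gamma> z \<le> f1 \<gamma> 0"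
      using assms by (intro f1_antimono) auto
    also have "\<dots> \<le> 2 * f1 \<gamma> 0 / (1 + \<bar>z\<bar>)"
    proof -
      have "f1 \<gamma> 0 * (1 + \<bar>z\<bar>) \<le> f1 \<gamma> 0 * 2"
        using False f1_pos[OF assms, of 0] by (intro mult_left_mono) auto
      then show ?thesis
        by (simp add: pos_le_divide_eq add_pos_nonneg mult.commute)
    qed
    also have "\<dots> \<le> 2 * max C (f1 \<gamma> 0) / (1 + \<bar>z\<bar>)"
      by (intro divide_right_mono) auto
    finally show ?thesis .
  qed
  moreover have "2 * max C (f1 \<gamma> 0) > 0"
    using \<open>C > 0\<close> by simp
  ultimately show ?thesis
    by blast
qed

lemma f1_location_scale_bound:
  assumes "\<gamma> > 0"
  shows "\<exists>C>0. \<forall>y \<mu> \<sigma> :: real. \<sigma> > 0 \<longrightarrow>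
      \<bar>y\<bar> * f1 \<gamma> ((y - \<mu>) / \<sigma>) \<le> \<bar>y\<bar> * f1 \<gamma> ((\<bar>y\<bar> - \<bar>\<mu>\<bar>) / \<sigma>)
      \<and> \<bar>y\<bar> * f1 \<gamma> ((\<bar>y\<bar> - \<bar>\<mu>\<bar>) / \<sigma>) \<le> C * (\<sigma> + \<bar>\<mu>\<bar>)"
proof -
  obtain C where "C > 0" and bound: "\<And>z. f1 \<gamma> z \<le> C / (1 + \<bar>z\<bar>)"
    using f1_le_div_one_plus_abs[OF assms] by blast
  have "\<bar>y\<bar> * f1 \<gamma> ((y - \<mu>) / \<sigma>) \<le> \<bar>y\<bar> * f1 \<gamma> ((\<bar>y\<bar> - \<bar>\<mu>\<bar>) / \<sigma>)
      \<and> \<bar>y\<bar> * f1 \<gamma> ((\<bar>y\<bar> - \<bar>\<mu>\<bar>) / \<sigma>) \<le> 2 * C * (\<sigma> + \<bar>\<mu>\<bar>)"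
    if "\<sigma> > 0" for y \<mu> \<sigma> :: real
    using abs_mult_location_scale_le_abs_diff[OF f1_antimono[OF assms] that]
      abs_mult_location_scale_abs_diff_le[OF bound _ that] \<open>C > 0\<close> by simp
  moreover have "2 * C > 0"
    using \<open>C > 0\<close> by simp
  ultimately show ?thesis
    by blast
qed

section \<open>The ratio of the densities and the mixture\<close>

lemma f0_div_f1_tendsto_0:
  assumes "\<gamma> > 0"
  shows "((\<lambda>z. f0 z / f1 \<gamma> z) \<longlongrightarrow> 0) at_infinity"
proof -
  obtain C where "C > 0"
    and lower: "\<And>z. 1 \<le> \<bar>z\<bar> \<Longrightarrow> C / \<bar>z\<bar> * (1 + ln (1 + \<bar>z\<bar>\<^sup>2)) powr (-1 - \<gamma>) \<le> f1 \<gamma> z"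
    using f1_lower_bound[OF assms] by blast
  define h where "h t = t * (1 + ln (1 + t\<^sup>2)) powr (1 + \<gamma>) * exp (- t\<^sup>2 / 2) / (sqrt (2 * pi) * C)"
    for t :: real
  have "((\<lambda>t. t * (1 + ln (1 + t\<^sup>2)) powr (1 + \<gamma>) * exp (- t\<^sup>2 / 2)) \<longlongrightarrow> 0) at_top"
    using assms by real_asymp
  then have "(h \<longlongrightarrow> 0) at_top"
    unfolding h_def by (rule tendsto_divide_zero)
  moreover have "filterlim (\<lambda>z::real. \<bar>z\<bar>) at_top at_infinity"
    using filterlim_norm_at_top[where 'a = real] by (simp add: real_norm_def[abs_def])
  ultimately have h: "((\<lambda>z. h \<bar>z\<bar>) \<longlongrightarrow> 0) at_infinity"
    by (rule filterlim_compose)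
  have "f0 z / f1 \<gamma> z \<le> h \<bar>z\<bar>" if z: "1 \<le> \<bar>z\<bar>" for z
  proof -
    define L where "L = 1 + ln (1 + \<bar>z\<bar>\<^sup>2)"
    have L: "0 < L"
      unfolding L_def by (rule one_plus_ln_pos) simp
    have lower_pos: "0 < C / \<bar>z\<bar> * L powr (-1 - \<gamma>)"
      using \<open>C > 0\<close> z L by simp
    have "f0 z / f1 \<gamma> z \<le> f0 z / (C / \<bar>z\<bar> * L powr (-1 - \<gamma>))"
      using divide_left_mono[OF lower[OF z, folded L_def] less_imp_le[OF f0_pos]
          mult_pos_pos[OF f1_pos[OF assms] lower_pos]] .
    also have "L powr (-1 - \<gamma>) = 1 / L powr (1 + \<gamma>)"
      using powr_minus_divide[of L "1 + \<gamma>"] by simp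
    also have "f0 z / (C / \<bar>z\<bar> * (1 / L powr (1 + \<gamma>))) = \<bar>z\<bar> * L powr (1 + \<gamma>) * f0 z / C"
      by simp
    also have "\<dots> = h \<bar>z\<bar>"
      unfolding h_def L_def f0_eq by simp
    finally show ?thesis .
  qed
  then have "\<forall>\<^sub>F z in at_infinity. f0 z / f1 \<gamma> z \<le> h \<bar>z\<bar>"
    unfolding eventually_at_infinity by (intro exI[of _ 1]) auto
  moreover have "\<forall>\<^sub>F z in at_infinity. 0 \<le> f0 z / f1 \<gamma> z"
    using f0_pos f1_pos[OF assms] by (intro always_eventually) (simp add: less_imp_le)
  ultimately show ?thesis
    by (intro tendsto_sandwich[OF _ _ tendsto_const h])
qed

lemma bdd_above_f0_div_f1:
  assumes "\<gamma> > 0"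
  shows "bdd_above (range (\<lambda>z. f0 z / f1 \<gamma> z))"
proof -
  have "\<forall>\<^sub>F z in at_infinity. f0 z / f1 \<gamma> z < 1"
    using f0_div_f1_tendsto_0[OF assms] by (rule order_tendstoD) simp
  then obtain R where R: "\<And>z. R \<le> \<bar>z\<bar> \<Longrightarrow> f0 z / f1 \<gamma> z < 1"
    unfolding eventually_at_infinity by auto
  have "f0 z / f1 \<gamma> z \<le> max 1 (f0 0 / f1 \<gamma> R)" for z
  proof (cases "R \<le> \<bar>z\<bar>")
    case True
    then show ?thesis
      using R[of z] by simp
  next
    case False
    then have "f0 z / f1 \<gamma> z \<le> f0 0 / f1 \<gamma> R"
      using assms f0_pos f1_pos[OF assms]
      by (intro frac_le f0_antimono f1_antimono) (auto intro: less_imp_le)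
    then show ?thesis
      by simp
  qed
  then show ?thesis
    by (intro bdd_aboveI2)
qed

lemma fmix_abs [simp]: "fmix \<gamma> s \<bar>z\<bar> = fmix \<gamma> s z"
  by (simp add: fmix_def)

lemma fmix_pos:
  assumes "\<gamma> > 0" "0 \<le> s" "s \<le> 1"
  shows "0 < fmix \<gamma> s z"
proof -
  have "0 < min (f0 z) (f1 \<gamma> z)"
    using f0_pos f1_pos[OF assms(1)] by simp
  also have "\<dots> = (1 - s) * min (f0 z) (f1 \<gamma> z) + s * min (f0 z) (f1 \<gamma> z)"
    by (simp add: algebra_simps)
  also have "\<dots> \<le> fmix \<gamma> s z"
    unfolding fmix_def using assms by (intro add_mono mult_left_mono) auto
  finally show ?thesis .
qed

lemma fmix_antimono:
  assumes "\<gamma> > 0" "0 \<le> s" "s \<le> 1" "\<bar>z\<^sub>1\<bar> \<le> \<bar>z\<^sub>2\<bar>"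
  shows "fmix \<gamma> s z\<^sub>2 \<le> fmix \<gamma> s z\<^sub>1"
  unfolding fmix_def using assms
  by (intro add_mono mult_left_mono f0_antimono f1_antimono) auto

lemma continuous_on_fmix: "\<gamma> > 0 \<Longrightarrow> continuous_on UNIV (fmix \<gamma> s)"
  unfolding fmix_def[abs_def] using continuous_on_f0 continuous_on_f1
  by (intro continuous_intros) auto

theorem lemmaS3:
  fixes \<gamma> s :: real
  assumes "\<gamma> > 0" and "0 < s" and "s < 1"
  shows
   "(\<forall>z::real. set_integrable lborel {0<..} (\<lambda>u. normal_density 0 (sqrt u) z * Hmix \<gamma> u))
    \<and> (\<forall>z::real. 0 < f0 z \<and> f0 z = f0 \<bar>z\<bar> \<and> f0 z \<le> f0 0)
    \<and> (\<forall>z::real. 0 < f1 \<gamma> z \<and> f1 \<gamma> z = f1 \<gamma> \<bar>z\<bar> \<and> f1 \<gamma> z \<le> f1 \<gamma> 0)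
    \<and> (\<forall>z::real. 0 < fmix \<gamma> s z \<and> fmix \<gamma> s z = fmix \<gamma> s \<bar>z\<bar> \<and> fmix \<gamma> s z \<le> fmix \<gamma> s 0)
    \<and> continuous_on {0..} f0 \<and> continuous_on {0..} (f1 \<gamma>) \<and> continuous_on {0..} (fmix \<gamma> s)
    \<and> (\<forall>r1 r2::real. 0 \<le> r1 \<longrightarrow> r1 \<le> r2 \<longrightarrow>
         f0 r2 \<le> f0 r1 \<and> f1 \<gamma> r2 \<le> f1 \<gamma> r1 \<and> fmix \<gamma> s r2 \<le> fmix \<gamma> s r1)
    \<and> ((\<lambda>z::real. f0 z / f1 \<gamma> z) \<longlongrightarrow> 0) at_infinity
    \<and> bdd_above (range (\<lambda>z::real. f0 z / f1 \<gamma> z))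
    \<and> (\<exists>C1>0. \<forall>z::real. z \<noteq> 0 \<longrightarrow>
         f1 \<gamma> z \<le> C1 / \<bar>z\<bar> * (1 + ln (1 + \<bar>z\<bar>^2)) powr (-1 - \<gamma>))
    \<and> (\<exists>C2>0. \<forall>z::real. \<bar>z\<bar> \<ge> 1 \<longrightarrow>
         f1 \<gamma> z \<ge> C2 / \<bar>z\<bar> * (1 + ln (1 + \<bar>z\<bar>^2)) powr (-1 - \<gamma>))
    \<and> (\<exists>C3>0. \<forall>z::real. f1 \<gamma> z \<le> C3 / (1 + \<bar>z\<bar>))
    \<and> (\<exists>C4>0. \<forall>y \<mu> \<sigma> :: real. \<sigma> > 0 \<longrightarrow>
         \<bar>y\<bar> * f1 \<gamma> ((y - \<mu>) / \<sigma>) \<le> \<bar>y\<bar> * f1 \<gamma> ((\<bar>y\<bar> - \<bar>\<mu>\<bar>) / \<sigma>)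
         \<and> \<bar>y\<bar> * f1 \<gamma> ((\<bar>y\<bar> - \<bar>\<mu>\<bar>) / \<sigma>) \<le> C4 * (\<sigma> + \<bar>\<mu>\<bar>))"
proof -
  note \<gamma> = \<open>\<gamma> > 0\<close>
  have s: "0 \<le> s" "s \<le> 1"
    using assms by auto
  have "\<forall>z. 0 < f0 z \<and> f0 z = f0 \<bar>z\<bar> \<and> f0 z \<le> f0 0"
    "\<forall>z. 0 < f1 \<gamma> z \<and> f1 \<gamma> z = f1 \<gamma> \<bar>z\<bar> \<and> f1 \<gamma> z \<le> f1 \<gamma> 0"
    "\<forall>z. 0 < fmix \<gamma> s z \<and> fmix \<gamma> s z = fmix \<gamma> s \<bar>z\<bar> \<and> fmix \<gamma> s z \<le> fmix \<gamma> s 0"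
    "\<forall>r1 r2::real. 0 \<le> r1 \<longrightarrow> r1 \<le> r2 \<longrightarrow>
       f0 r2 \<le> f0 r1 \<and> f1 \<gamma> r2 \<le> f1 \<gamma> r1 \<and> fmix \<gamma> s r2 \<le> fmix \<gamma> s r1"
    using f0_pos f1_pos[OF \<gamma>] fmix_pos[OF \<gamma> s]
    by (auto intro: f0_antimono f1_antimono[OF \<gamma>] fmix_antimono[OF \<gamma> s])
  moreover have "continuous_on {0..} f0" "continuous_on {0..} (f1 \<gamma>)" "continuous_on {0..} (fmix \<gamma> s)"
    using continuous_on_f0 continuous_on_f1[OF \<gamma>] continuous_on_fmix[OF \<gamma>]
    by (auto intro: continuous_on_subset)
  ultimately show ?thesis
    unfolding mix_integrand_def[symmetric]
    using set_integrable_mix_integrand[OF \<gamma>] f0_div_f1_tendsto_0[OF \<gamma>] bdd_above_f0_div_f1[OF \<gamma>]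
      f1_upper_bound[OF \<gamma>] f1_lower_bound[OF \<gamma>] f1_le_div_one_plus_abs[OF \<gamma>]
      f1_location_scale_bound[OF \<gamma>]
    by blast
qed

end
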